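(* If $r$ is a nonzero integer and $n$ is a positive integer, then the integer $F_r^2+F_rF_{r-1}-F_{r-1}^2$ divides both \[ F_r^{n+2}L_n+F_{r-1}F_r^{n+1}L_{n+1}+F_rF_{r-1}^{n+1}-2F_{r-1}^{n+2} \quad\text{and}\quad F_r^{n+2}F_n+F_{r-1}F_r^{n+1}F_{n+1}-F_rF_{r-1}^{n+1}. \]
   Context: $F_n$ and $L_n$ denote the Fibonacci and Lucas numbers, defined for all integers $n$ by $F_0=0,F_1=1$, $L_0=2,L_1=1$ and $x_n=x_{n-1}+x_{n-2}$; equivalently $F_n=(\alpha^n-\beta^n)/(\alpha-\beta)$, $L_n=\alpha^n+\beta^n$ with $\alpha=(1+\sqrt5)/2$, $\beta=(1-\sqrt5)/2$. In particular $F_{-n}=(-1)^{n-1}F_n$ and $L_{-n}=(-1)^nL_n$. *)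

theory Defs
  imports Main
begin

fun fibn :: "nat \<Rightarrow> int" where
  "fibn 0 = 0"
| "fibn (Suc 0) = 1"
| "fibn (Suc (Suc n)) = fibn (Suc n) + fibn n"

fun lucn :: "nat \<Rightarrow> int" where
  "lucn 0 = 2"
| "lucn (Suc 0) = 1"
| "lucn (Suc (Suc n)) = lucn (Suc n) + lucn n"

definition F :: "int \<Rightarrow> int" where
  "F k = (if k \<ge> 0 then fibn (nat k) else (-1) ^ (nat (-k) + 1) * fibn (nat (-k)))"

definition L :: "int \<Rightarrow> int" where
  "L k = (if k \<ge> 0 then lucn (nat k) else (-1) ^ nat (-k) * lucn (nat (-k)))"

end

theory Submission
  imports Defs
begin

text \<open>The divisibility holds for arbitrary integers \<open>a = F r\<close>, \<open>b = F (r - 1)\<close> and every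
  \<open>n \<ge> 0\<close>. Writing \<open>E\<^sub>n\<close> for either
  expression (with \<open>X = L\<close> or \<open>X = F\<close>) and \<open>D = a\<^sup>2 + a b - b\<^sup>2\<close>, the recurrence of \<open>X\<close> gives
  \<open>E\<^sub>n\<^sub>+\<^sub>1 = b E\<^sub>n + D a\<^sup>n\<^sup>+\<^sup>1 X\<^sub>n\<^sub>+\<^sub>1\<close>, while \<open>E\<^sub>0\<close> is \<open>2D\<close> resp. \<open>0\<close>; induction on \<open>n\<close> finishes.\<close>

lemma F_of_nat [simp]: "F (int n) = fibn n"
  by (simp add: F_def)

lemma L_of_nat [simp]: "L (int n) = lucn n"
  by (simp add: L_def)

lemma lucas_form_dvd:
  fixes a b :: int
  shows "(a^2 + a*b - b^2) dvd
           (a^(n+2) * lucn n + b * a^(n+1) * lucn (n+1) + a * b^(n+1) - 2 * b^(n+2))"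
proof (induction n)
  case 0
  have "a^(0+2) * lucn 0 + b * a^(0+1) * lucn (0+1) + a * b^(0+1) - 2 * b^(0+2)
      = (a^2 + a*b - b^2) * 2"
    by (simp add: power2_eq_square algebra_simps)
  then show ?case
    by (metis dvd_triv_left)
next
  case (Suc n)
  have "a^(Suc n+2) * lucn (Suc n) + b * a^(Suc n+1) * lucn (Suc n+1) + a * b^(Suc n+1)
          - 2 * b^(Suc n+2)
      = b * (a^(n+2) * lucn n + b * a^(n+1) * lucn (n+1) + a * b^(n+1) - 2 * b^(n+2))
          + (a^2 + a*b - b^2) * (a^(n+1) * lucn (n+1))"
    by (simp add: power2_eq_square algebra_simps)
  then show ?case
    using Suc.IH by (metis dvd_add dvd_mult dvd_triv_left)
qed

lemma fibonacci_form_dvd: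
  fixes a b :: int
  shows "(a^2 + a*b - b^2) dvd
           (a^(n+2) * fibn n + b * a^(n+1) * fibn (n+1) - a * b^(n+1))"
proof (induction n)
  case 0
  then show ?case
    by simp
next
  case (Suc n)
  have "a^(Suc n+2) * fibn (Suc n) + b * a^(Suc n+1) * fibn (Suc n+1) - a * b^(Suc n+1)
      = b * (a^(n+2) * fibn n + b * a^(n+1) * fibn (n+1) - a * b^(n+1))
          + (a^2 + a*b - b^2) * (a^(n+1) * fibn (n+1))"
    by (simp add: power2_eq_square algebra_simps)
  then show ?case
    using Suc.IH by (metis dvd_add dvd_mult dvd_triv_left)
qed

theorem mainTheorem5:
  fixes r :: int and n :: nat
  assumes "r \<noteq> 0" and "n \<ge> 1"
  shows "(F r ^ 2 + F r * F (r - 1) - F (r - 1) ^ 2) dvd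
           (F r ^ (n + 2) * L (int n) + F (r - 1) * F r ^ (n + 1) * L (int n + 1)
            + F r * F (r - 1) ^ (n + 1) - 2 * F (r - 1) ^ (n + 2))
       \<and> (F r ^ 2 + F r * F (r - 1) - F (r - 1) ^ 2) dvd
           (F r ^ (n + 2) * F (int n) + F (r - 1) * F r ^ (n + 1) * F (int n + 1)
            - F r * F (r - 1) ^ (n + 1))"
proof -
  have "int n + 1 = int (n + 1)"
    by simp
  then show ?thesis
    using lucas_form_dvd [of "F r" "F (r - 1)" n] fibonacci_form_dvd [of "F r" "F (r - 1)" n]
    by (simp only: F_of_nat L_of_nat)
qed

end
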